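(* Assume $K$ has nonempty interior and let $d$ be the maximum degree of $f_1,\ldots,f_m$. Define $$\mathcal V=\{v=(v_1,\ldots,v_m)\in\mathbb R^m:\ \exists\, y\in\mathscr R_d(K)\text{ with } y_0=1 \text{ and } v_i>\langle f_i,y\rangle \ (i=1,\ldots,m)\}.$$ Then the interior of $\mathrm{conv}(\mathcal U)$ equals $\mathcal V$. Moreover, if $\mathcal U$ is convex, then a vector $v\in f(K)$ is a weakly Pareto value if and only if $v$ belongs to the boundary of the closure of $\mathcal V$.
   Context: Let $f_1,\ldots,f_m,c_i$ ($i\in\mathcal E\cup\mathcal I$) be real polynomials in $x\in\mathbb R^n$, $\mathcal E,\mathcal I$ disjoint finite index sets, and $K=\{x: c_i(x)=0\ (i\in\mathcal E),\ c_j(x)\ge0\ (j\in\mathcal I)\}$; $f=(f_1,\ldots,f_m)$, $\mathcal U=f(K)+\mathbb R^m_+=\{u: u_i\ge f_i(x)\ \forall i \text{ for some } x\in K\}$. A point $x^*\in K$ is weakly Pareto if no $x\in K$ has $f_i(x)<f_i(x^* )$ for all $i$; $v$ is a weakly Pareto value if $v=f(x^* )$ for a weakly Pareto point $x^*$. For $d\in\mathbb N$, $\mathbb N^n_d=\{\alpha\in\mathbb N^n:|\alpha|\le d\}$; a vector $y=(y_\alpha)_{\alpha\in\mathbb N^n_d}$ is a truncated multi-sequence, and for $p=\sum_\alpha p_\alpha x^\alpha$ of degree $\le d$, $\langle p,y\rangle=\sum_\alpha p_\alpha y_\alpha$; $y_0$ denotes the entry with $\alpha=0$. The moment cone is $\mathscr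 R_d(K)=\{y\in\mathbb R^{\mathbb N^n_d}: \exists$ a Borel measure $\mu$ with support in $K$ and $y_\alpha=\int x^\alpha d\mu$ for all $\alpha\in\mathbb N^n_d\}$. *)

theory Defs
  imports "HOL-Analysis.Analysis" "HOL-Probability.Probability"
begin

text \<open>Multivariate real polynomials in x in R^n (n = CARD('n)) are represented by their
coefficient functions on exponent vectors alpha :: 'n => nat, with finite support.\<close>

definition mdeg :: "('n::finite \<Rightarrow> nat) \<Rightarrow> nat" where
  "mdeg \<alpha> = (\<Sum>i\<in>UNIV. \<alpha> i)"

definition mono_set :: "nat \<Rightarrow> ('n::finite \<Rightarrow> nat) set" where
  "mono_set d = {\<alpha>. mdeg \<alpha> \<le> d}"

definition monom :: "('n::finite \<Rightarrow> nat) \<Rightarrow> real^'n \<Rightarrow> real" where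
  "monom \<alpha> x = (\<Prod>i\<in>UNIV. (x $ i) ^ (\<alpha> i))"

definition is_poly :: "(('n::finite \<Rightarrow> nat) \<Rightarrow> real) \<Rightarrow> bool" where
  "is_poly p \<longleftrightarrow> finite {\<alpha>. p \<alpha> \<noteq> 0}"

definition peval :: "(('n::finite \<Rightarrow> nat) \<Rightarrow> real) \<Rightarrow> real^'n \<Rightarrow> real" where
  "peval p x = (\<Sum>\<alpha>\<in>{\<alpha>. p \<alpha> \<noteq> 0}. p \<alpha> * monom \<alpha> x)"

definition pdeg :: "(('n::finite \<Rightarrow> nat) \<Rightarrow> real) \<Rightarrow> nat" where
  "pdeg p = Max (insert 0 (mdeg ` {\<alpha>. p \<alpha> \<noteq> 0}))"

definition mpair :: "nat \<Rightarrow> (('n::finite \<Rightarrow> nat) \<Rightarrow> real) \<Rightarrow> (('n \<Rightarrow> nat) \<Rightarrow> real) \<Rightarrow> real" where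
  "mpair d p y = (\<Sum>\<alpha>\<in>mono_set d. p \<alpha> * y \<alpha>)"

definition moment_cone :: "nat \<Rightarrow> (real^'n::finite) set \<Rightarrow> (('n \<Rightarrow> nat) \<Rightarrow> real) set" where
  "moment_cone d K = {y. (\<forall>\<alpha>. \<alpha> \<notin> mono_set d \<longrightarrow> y \<alpha> = 0) \<and>
     (\<exists>\<mu> :: (real^'n) measure. sets \<mu> = sets borel \<and> emeasure \<mu> (UNIV - K) = 0 \<and>
        (\<forall>\<alpha>\<in>mono_set d. integrable \<mu> (monom \<alpha>) \<and> y \<alpha> = integral\<^sup>L \<mu> (monom \<alpha>)))}"

definition weakly_pareto :: "(real^'n) set \<Rightarrow> ('m \<Rightarrow> real^'n \<Rightarrow> real) \<Rightarrow> real^'n \<Rightarrow> bool" where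
  "weakly_pareto K F x \<longleftrightarrow> x \<in> K \<and> \<not> (\<exists>z\<in>K. \<forall>i. F i z < F i x)"

definition weakly_pareto_value :: "(real^'n) set \<Rightarrow> ('m::finite \<Rightarrow> real^'n \<Rightarrow> real) \<Rightarrow> real^'m \<Rightarrow> bool" where
  "weakly_pareto_value K F v \<longleftrightarrow> (\<exists>x. weakly_pareto K F x \<and> v = (\<chi> i. F i x))"

end

theory Submission
  imports Defs
begin

text \<open>
  The equality \<open>interior (conv U) = V\<close> rests on the identification of normalized moment
  vectors with probability measures on \<open>K\<close>. If \<open>u\<close> lies in the convex hull of \<open>U = f(K) + \<real>\<^sup>m\<^sub>+\<close>, then \<open>u\<close> dominates
  a finite convex combination of points of \<open>f(K)\<close>; the corresponding finitely supported
  measure on \<open>K\<close> has a moment vector \<open>y\<close> with \<open>\<langle>f\<^sub>i,y\<rangle> \<le> u\<^sub>i\<close>. Conversely, a moment vector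
  with \<open>y\<^sub>0 = 1\<close> comes from a probability measure \<open>\<mu>\<close> on \<open>K\<close>, and by hyperplane separation
  the mean \<open>\<integral> f d\<mu>\<close> lies in the closure of \<open>conv U\<close>. Since both sets are upward closed, the
  strict inequalities turn membership in the closure into membership in the interior.
  When \<open>U\<close> is convex, the frontier of \<open>closure V\<close> is \<open>closure U - interior U\<close>, and a value
  \<open>f(x)\<close> lies in \<open>interior U\<close> exactly when some point of \<open>K\<close> improves all objectives strictly.
\<close>

lemma finite_mono_set: "finite (mono_set d :: ('n::finite \<Rightarrow> nat) set)"
proof (rule finite_subset)
  show "mono_set d \<subseteq> (\<Pi>\<^sub>E i \<in> (UNIV::'n set). {..d})"
  proof
    fix \<alpha> :: "'n \<Rightarrow> nat" assume "\<alpha> \<in> mono_set d"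
    moreover have "\<alpha> i \<le> (\<Sum>i\<in>UNIV. \<alpha> i)" for i by (rule member_le_sum) auto
    ultimately show "\<alpha> \<in> (\<Pi>\<^sub>E i \<in> UNIV. {..d})"
      by (auto simp: mono_set_def mdeg_def intro: order_trans)
  qed
qed (rule finite_PiE, auto)

lemma zero_mem_mono_set: "(\<lambda>_. 0) \<in> mono_set d"
  by (simp add: mono_set_def mdeg_def)

lemma monom_zero: "monom (\<lambda>_. 0) = (\<lambda>_. 1)"
  by (simp add: monom_def fun_eq_iff)

lemma continuous_on_monom: "continuous_on UNIV (monom \<alpha>)"
  unfolding monom_def by (intro continuous_intros)

lemma continuous_on_peval: "continuous_on UNIV (peval p)"
  unfolding peval_def using continuous_on_monom by (intro continuous_intros) auto

lemma poly_support_subset_mono_set: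
  assumes "is_poly p" "pdeg p \<le> d"
  shows "{\<alpha>. p \<alpha> \<noteq> 0} \<subseteq> mono_set d"
proof
  fix \<alpha> assume "\<alpha> \<in> {\<alpha>. p \<alpha> \<noteq> 0}"
  then have "mdeg \<alpha> \<le> pdeg p"
    using assms(1) unfolding pdeg_def by (intro Max_ge) (auto simp: is_poly_def)
  with assms(2) show "\<alpha> \<in> mono_set d" by (simp add: mono_set_def)
qed

lemma mpair_eq_integral:
  fixes \<mu> :: "(real^'n::finite) measure"
  assumes "is_poly p" "pdeg p \<le> d"
    and moments: "\<forall>\<alpha>\<in>mono_set d. integrable \<mu> (monom \<alpha>) \<and> y \<alpha> = integral\<^sup>L \<mu> (monom \<alpha>)"
  shows "integrable \<mu> (peval p)" "mpair d p y = integral\<^sup>L \<mu> (peval p)"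
proof -
  let ?S = "{\<alpha>. p \<alpha> \<noteq> 0}"
  have sub: "?S \<subseteq> mono_set d" by (rule poly_support_subset_mono_set[OF assms(1,2)])
  have int: "integrable \<mu> (\<lambda>x. p \<alpha> * monom \<alpha> x)" if "\<alpha> \<in> ?S" for \<alpha>
    using moments sub that by auto
  have peval_eq: "peval p = (\<lambda>x. \<Sum>\<alpha>\<in>?S. p \<alpha> * monom \<alpha> x)"
    by (simp add: peval_def fun_eq_iff)
  show "integrable \<mu> (peval p)" unfolding peval_eq using int by auto
  have "mpair d p y = (\<Sum>\<alpha>\<in>?S. p \<alpha> * y \<alpha>)"
    unfolding mpair_def by (rule sum.mono_neutral_right[OF finite_mono_set sub]) auto
  also have "\<dots> = (\<Sum>\<alpha>\<in>?S. integral\<^sup>L \<mu> (\<lambda>x. p \<alpha> * monom \<alpha> x))"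
    using moments sub by (intro sum.cong) auto
  also have "\<dots> = integral\<^sup>L \<mu> (peval p)"
    unfolding peval_eq by (rule Bochner_Integration.integral_sum[symmetric]) (rule int)
  finally show "mpair d p y = integral\<^sup>L \<mu> (peval p)" .
qed

lemma moment_cone_representing_prob:
  fixes K :: "(real^'n::finite) set"
  assumes "y \<in> moment_cone d K" "y (\<lambda>_. 0) = 1" "K \<in> sets borel"
  obtains \<mu> where "prob_space \<mu>" "sets \<mu> = sets borel" "AE x in \<mu>. x \<in> K"
    "\<forall>\<alpha>\<in>mono_set d. integrable \<mu> (monom \<alpha>) \<and> y \<alpha> = integral\<^sup>L \<mu> (monom \<alpha>)"
proof -
  obtain \<mu> :: "(real^'n) measure" where sets: "sets \<mu> = sets borel"
    and null: "emeasure \<mu> (UNIV - K) = 0"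
    and moments: "\<forall>\<alpha>\<in>mono_set d. integrable \<mu> (monom \<alpha>) \<and> y \<alpha> = integral\<^sup>L \<mu> (monom \<alpha>)"
    using assms(1) unfolding moment_cone_def by auto
  have "integrable \<mu> (\<lambda>_. 1::real)" and total: "integral\<^sup>L \<mu> (\<lambda>_. 1::real) = 1"
    using moments assms(2) zero_mem_mono_set[of d] by (auto simp: monom_zero)
  then interpret finite_measure \<mu>
    by (intro finite_measureI) (simp add: integrable_iff_bounded)
  have "emeasure \<mu> (space \<mu>) = 1" using total by (simp add: emeasure_eq_measure)
  then have "prob_space \<mu>" by (rule prob_spaceI)
  moreover have "AE x in \<mu>. x \<in> K"
    using null assms(3) sets_eq_imp_space_eq[OF sets] by (intro AE_I'[of "UNIV - K"]) (auto simp: sets)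
  ultimately show ?thesis using that sets moments by blast
qed

lemma finite_pmf_moment_vector:
  fixes q :: "(real^'n::finite) pmf"
  assumes "finite (set_pmf q)" "set_pmf q \<subseteq> K" "K \<in> sets borel"
  obtains y where "y \<in> moment_cone d K" "y (\<lambda>_. 0) = 1"
    "\<And>p. is_poly p \<Longrightarrow> pdeg p \<le> d \<Longrightarrow> mpair d p y = measure_pmf.expectation q (peval p)"
proof -
  define \<mu> where "\<mu> = distr (measure_pmf q) borel id"
  have integral_\<mu>: "integrable \<mu> h" "integral\<^sup>L \<mu> h = measure_pmf.expectation q h"
    if "continuous_on UNIV h" for h :: "real^'n \<Rightarrow> real"
  proof -
    have "h \<in> borel_measurable borel" using that by (rule borel_measurable_continuous_onI)
    then show "integrable \<mu> h" "integral\<^sup>L \<mu> h = measure_pmf.expectation q h"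
      using integrable_measure_pmf_finite[OF assms(1)]
      by (simp_all add: \<mu>_def integrable_distr_eq integral_distr)
  qed
  have "emeasure \<mu> (UNIV - K) = emeasure (measure_pmf q) ((UNIV - K) \<inter> set_pmf q)"
    using assms(3) by (simp add: \<mu>_def emeasure_distr emeasure_Int_set_pmf)
  also have "\<dots> = 0" using assms(2) by (simp add: Diff_Int_distrib2 Int_absorb1)
  finally have null: "emeasure \<mu> (UNIV - K) = 0" .
  define y where "y \<alpha> = (if \<alpha> \<in> mono_set d then integral\<^sup>L \<mu> (monom \<alpha>) else 0)" for \<alpha>
  have moments: "\<forall>\<alpha>\<in>mono_set d. integrable \<mu> (monom \<alpha>) \<and> y \<alpha> = integral\<^sup>L \<mu> (monom \<alpha>)"
    using integral_\<mu>[OF continuous_on_monom] by (simp add: y_def)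
  show ?thesis
  proof
    show "y \<in> moment_cone d K"
      unfolding moment_cone_def using null moments
      by (intro CollectI conjI exI[of _ \<mu>]) (auto simp: y_def \<mu>_def)
    show "y (\<lambda>_. 0) = 1"
      using integral_\<mu>(2)[of "\<lambda>_. 1"] zero_mem_mono_set[of d] by (simp add: y_def monom_zero)
    show "mpair d p y = measure_pmf.expectation q (peval p)" if "is_poly p" "pdeg p \<le> d" for p
      using mpair_eq_integral(2)[OF that moments] integral_\<mu>[OF continuous_on_peval] by simp
  qed
qed

lemma convex_hull_finite_pmf:
  fixes u :: "real^'m"
  assumes "u \<in> convex hull A"
  obtains p where "finite (set_pmf p)" "set_pmf p \<subseteq> A"
    "\<And>i. u $ i = measure_pmf.expectation p (\<lambda>s. s $ i)"
proof -
  obtain S w where S: "finite S" "S \<subseteq> A" "\<forall>s\<in>S. 0 \<le> w s" "sum w S = 1"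
    and u: "(\<Sum>s\<in>S. w s *\<^sub>R s) = u"
    using assms unfolding convex_hull_explicit by blast
  define \<omega> where "\<omega> s = (if s \<in> S then w s else 0)" for s
  have nonneg: "0 \<le> \<omega> s" for s using S(3) by (simp add: \<omega>_def)
  have "(\<integral>\<^sup>+s. ennreal (\<omega> s) \<partial>count_space UNIV) = (\<Sum>s\<in>S. ennreal (\<omega> s))"
    using S(1) by (intro nn_integral_count_space') (auto simp: \<omega>_def)
  also have "\<dots> = 1" using S(3,4) by (simp add: \<omega>_def sum_ennreal)
  finally have total: "(\<integral>\<^sup>+s. ennreal (\<omega> s) \<partial>count_space UNIV) = 1" .
  define p where "p = embed_pmf \<omega>"
  have pmf_p: "pmf p s = \<omega> s" for s unfolding p_def by (rule pmf_embed_pmf[OF nonneg total])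
  have support: "set_pmf p \<subseteq> S" by (auto simp: set_pmf_eq pmf_p \<omega>_def)
  show ?thesis
  proof
    show "finite (set_pmf p)" using support S(1) by (rule finite_subset)
    show "set_pmf p \<subseteq> A" using support S(2) by blast
    have "measure_pmf.expectation p (\<lambda>s. s $ i) = (\<Sum>s\<in>S. w s * s $ i)" for i
      using support by (subst integral_measure_pmf[OF S(1)]) (auto simp: pmf_p \<omega>_def)
    then show "u $ i = measure_pmf.expectation p (\<lambda>s. s $ i)" for i
      using u by auto
  qed
qed

definition upward_closed :: "(real^'m) set \<Rightarrow> bool" where
  "upward_closed S \<longleftrightarrow> (\<forall>a\<in>S. \<forall>b. (\<forall>i. a $ i \<le> b $ i) \<longrightarrow> b \<in> S)"

lemma upward_closed_convex_hull:
  assumes "upward_closed S"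
  shows "upward_closed (convex hull S)"
  unfolding upward_closed_def
proof (intro ballI allI impI)
  fix a b assume a: "a \<in> convex hull S" and ab: "\<forall>i. a $ i \<le> b $ i"
  have "(\<lambda>x. (b - a) + x) ` S \<subseteq> S"
    using assms ab unfolding upward_closed_def by auto
  then have "convex hull ((\<lambda>x. (b - a) + x) ` S) \<subseteq> convex hull S" by (rule hull_mono)
  moreover have "b \<in> convex hull ((\<lambda>x. (b - a) + x) ` S)"
    unfolding convex_hull_translation using a by (intro image_eqI[of _ _ a]) auto
  ultimately show "b \<in> convex hull S" by blast
qed

lemma open_strict_upper_orthant: "open {z::real^'m. \<forall>i. u $ i < z $ i}"
proof -
  have "{z::real^'m. \<forall>i. u $ i < z $ i} = (\<Inter>i. {z. z $ i > u $ i})" by auto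
  then show ?thesis by (simp add: open_INT open_halfspace_component_gt_cart)
qed

lemma open_strict_lower_orthant: "open {z::real^'m. \<forall>i. z $ i < v $ i}"
proof -
  have "{z::real^'m. \<forall>i. z $ i < v $ i} = (\<Inter>i. {z. z $ i < v $ i})" by auto
  then show ?thesis by (simp add: open_INT open_halfspace_component_lt_cart)
qed

lemma interior_upward_closed_iff:
  fixes S :: "(real^'m) set"
  assumes "upward_closed S"
  shows "w \<in> interior S \<longleftrightarrow> (\<exists>u\<in>S. \<forall>i. u $ i < w $ i)"
proof
  assume "w \<in> interior S"
  have "(\<lambda>n. w - inverse (real (Suc n)) *\<^sub>R (\<chi> i. 1)) \<longlonglongrightarrow> w - 0 *\<^sub>R (\<chi> i. 1)"
    by (intro tendsto_intros LIMSEQ_inverse_real_of_nat)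
  then have "eventually (\<lambda>n. w - inverse (real (Suc n)) *\<^sub>R (\<chi> i. 1) \<in> interior S) sequentially"
    using \<open>w \<in> interior S\<close> by (intro topological_tendstoD) auto
  then obtain n where "w - inverse (real (Suc n)) *\<^sub>R (\<chi> i. 1) \<in> S"
    using interior_subset by (auto simp: eventually_sequentially)
  then show "\<exists>u\<in>S. \<forall>i. u $ i < w $ i" by (intro bexI) auto
next
  assume "\<exists>u\<in>S. \<forall>i. u $ i < w $ i"
  then obtain u where "u \<in> S" "\<forall>i. u $ i < w $ i" by blast
  then have "w \<in> {z. \<forall>i. u $ i < z $ i}" "{z. \<forall>i. u $ i < z $ i} \<subseteq> S"
    using assms by (auto simp: upward_closed_def less_imp_le)
  then show "w \<in> interior S" by (intro interiorI[OF open_strict_upper_orthant])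
qed

lemma upward_closed_closure_imp_interior:
  fixes S :: "(real^'m) set"
  assumes "upward_closed S" "w \<in> closure S" "\<forall>i. w $ i < v $ i"
  shows "v \<in> interior S"
proof -
  have "{z. \<forall>i. z $ i < v $ i} \<inter> S \<noteq> {}"
    using assms(2,3) open_Int_closure_eq_empty[OF open_strict_lower_orthant, of v S] by blast
  then show ?thesis using interior_upward_closed_iff[OF assms(1)] by blast
qed

lemma expectation_in_closure_convex_hull:
  fixes \<mu> :: "'a measure" and F :: "'m::finite \<Rightarrow> 'a \<Rightarrow> real"
  assumes "prob_space \<mu>" "AE x in \<mu>. (\<chi> i. F i x) \<in> A" "\<And>i. integrable \<mu> (F i)"
  shows "(\<chi> i. integral\<^sup>L \<mu> (F i)) \<in> closure (convex hull A)"
proof (rule ccontr)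
  interpret prob_space \<mu> by fact
  let ?w = "\<chi> i. integral\<^sup>L \<mu> (F i)"
  assume "?w \<notin> closure (convex hull A)"
  then obtain a b where sep: "inner a ?w < b" "\<forall>x\<in>closure (convex hull A). b < inner a x"
    using separating_hyperplane_closed_point[OF convex_closure[OF convex_convex_hull] closed_closure]
    by blast
  have "b \<le> inner a (\<chi> i. F i x)" if "(\<chi> i. F i x) \<in> A" for x
    using sep(2) closure_subset[THEN subsetD, OF hull_inc[OF that]] by (simp add: less_imp_le)
  then have "AE x in \<mu>. b \<le> inner a (\<chi> i. F i x)"
    using assms(2) by (auto elim: AE_mp)
  then have "b \<le> integral\<^sup>L \<mu> (\<lambda>x. \<Sum>i\<in>UNIV. a $ i * F i x)"
    using assms(3) by (intro integral_ge_const) (auto simp: inner_vec_def)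
  also have "\<dots> = inner a ?w"
    using assms(3) by (simp add: Bochner_Integration.integral_sum inner_vec_def)
  finally show False using sep(1) by linarith
qed

definition upper_image :: "'a set \<Rightarrow> ('m \<Rightarrow> 'a \<Rightarrow> real) \<Rightarrow> (real^'m) set" where
  "upper_image K g = {u. \<exists>x\<in>K. \<forall>i. g i x \<le> u $ i}"

lemma upward_closed_upper_image: "upward_closed (upper_image K g)"
  unfolding upward_closed_def upper_image_def using order_trans by blast

lemma value_mem_upper_image: "x \<in> K \<Longrightarrow> (\<chi> i. g i x) \<in> upper_image K g"
  unfolding upper_image_def by auto

lemma convex_hull_upper_image_dominates_moment:
  fixes f :: "'m::finite \<Rightarrow> ('n::finite \<Rightarrow> nat) \<Rightarrow> real" and K :: "(real^'n) set"
  assumes "K \<in> sets borel" "\<And>i. is_poly (f i)" "\<And>i. pdeg (f i) \<le> d"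
    and "u \<in> convex hull upper_image K (\<lambda>i. peval (f i))"
  obtains y where "y \<in> moment_cone d K" "y (\<lambda>_. 0) = 1" "\<And>i. mpair d (f i) y \<le> u $ i"
proof -
  let ?U = "upper_image K (\<lambda>i. peval (f i))"
  obtain p where p: "finite (set_pmf p)" "set_pmf p \<subseteq> ?U"
    "\<And>i. u $ i = measure_pmf.expectation p (\<lambda>s. s $ i)"
    using convex_hull_finite_pmf[OF assms(4)] by blast
  have "\<forall>s\<in>?U. \<exists>x. x \<in> K \<and> (\<forall>i. peval (f i) x \<le> s $ i)" by (auto simp: upper_image_def)
  then obtain g where g: "\<forall>s\<in>?U. g s \<in> K \<and> (\<forall>i. peval (f i) (g s) \<le> s $ i)"
    by (rule bchoice[elim_format]) blast
  define q where "q = map_pmf g p"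
  have "finite (set_pmf q)" "set_pmf q \<subseteq> K" using p(1,2) g by (auto simp: q_def)
  then obtain y where y: "y \<in> moment_cone d K" "y (\<lambda>_. 0) = 1"
    "\<And>p. is_poly p \<Longrightarrow> pdeg p \<le> d \<Longrightarrow> mpair d p y = measure_pmf.expectation q (peval p)"
    using finite_pmf_moment_vector assms(1) by blast
  have "mpair d (f i) y \<le> u $ i" for i
  proof -
    have "mpair d (f i) y = measure_pmf.expectation p (\<lambda>s. peval (f i) (g s))"
      using y(3) assms(2,3) by (simp add: q_def)
    also have "\<dots> \<le> measure_pmf.expectation p (\<lambda>s. s $ i)"
      using p(1,2) g
      by (intro integral_mono_AE integrable_measure_pmf_finite) (auto simp: AE_measure_pmf_iff)
    finally show ?thesis using p(3) by simp
  qed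
  with y(1,2) show ?thesis using that by blast
qed

lemma interior_convex_hull_upper_image_eq:
  fixes f :: "'m::finite \<Rightarrow> ('n::finite \<Rightarrow> nat) \<Rightarrow> real" and K :: "(real^'n) set"
  assumes "K \<in> sets borel" "\<And>i. is_poly (f i)" "\<And>i. pdeg (f i) \<le> d"
  shows "interior (convex hull upper_image K (\<lambda>i. peval (f i))) =
    {v. \<exists>y\<in>moment_cone d K. y (\<lambda>_. 0) = 1 \<and> (\<forall>i. v $ i > mpair d (f i) y)}"
    (is "interior ?C = ?V")
proof
  have up: "upward_closed ?C" by (intro upward_closed_convex_hull upward_closed_upper_image)
  show "interior ?C \<subseteq> ?V"
  proof
    fix v assume "v \<in> interior ?C"
    then obtain u where u: "u \<in> ?C" "\<forall>i. u $ i < v $ i"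
      using interior_upward_closed_iff[OF up] by blast
    obtain y where "y \<in> moment_cone d K" "y (\<lambda>_. 0) = 1" "\<And>i. mpair d (f i) y \<le> u $ i"
      using convex_hull_upper_image_dominates_moment[OF assms u(1)] by blast
    with u(2) show "v \<in> ?V" by (auto intro: order_le_less_trans)
  qed
  show "?V \<subseteq> interior ?C"
  proof
    fix v assume "v \<in> ?V"
    then obtain y where y: "y \<in> moment_cone d K" "y (\<lambda>_. 0) = 1" "\<forall>i. mpair d (f i) y < v $ i"
      by auto
    obtain \<mu> where \<mu>: "prob_space \<mu>" "sets \<mu> = sets borel" "AE x in \<mu>. x \<in> K"
      "\<forall>\<alpha>\<in>mono_set d. integrable \<mu> (monom \<alpha>) \<and> y \<alpha> = integral\<^sup>L \<mu> (monom \<alpha>)"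
      using moment_cone_representing_prob[OF y(1,2) assms(1)] by blast
    note mean = mpair_eq_integral[OF assms(2,3) \<mu>(4)]
    have "AE x in \<mu>. (\<chi> i. peval (f i) x) \<in> upper_image K (\<lambda>i. peval (f i))"
      using \<mu>(3) by eventually_elim (rule value_mem_upper_image)
    then have "(\<chi> i. integral\<^sup>L \<mu> (peval (f i))) \<in> closure ?C"
      by (intro expectation_in_closure_convex_hull[OF \<mu>(1)] mean(1))
    moreover have "\<forall>i. (\<chi> i. integral\<^sup>L \<mu> (peval (f i))) $ i < v $ i" using y(3) mean(2) by simp
    ultimately show "v \<in> interior ?C" by (rule upward_closed_closure_imp_interior[OF up])
  qed
qed

lemma weakly_pareto_value_iff_not_interior:
  fixes g :: "'m::finite \<Rightarrow> real^'n \<Rightarrow> real"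
  assumes "x \<in> K"
  shows "weakly_pareto_value K g (\<chi> i. g i x) \<longleftrightarrow> (\<chi> i. g i x) \<notin> interior (upper_image K g)"
proof -
  have "(\<chi> i. g i x) \<in> interior (upper_image K g) \<longleftrightarrow> (\<exists>z\<in>K. \<forall>i. g i z < g i x)"
    unfolding interior_upward_closed_iff[OF upward_closed_upper_image]
  proof
    assume "\<exists>u\<in>upper_image K g. \<forall>i. u $ i < (\<chi> i. g i x) $ i"
    then show "\<exists>z\<in>K. \<forall>i. g i z < g i x"
      unfolding upper_image_def by (auto intro: order_le_less_trans)
  next
    assume "\<exists>z\<in>K. \<forall>i. g i z < g i x"
    then obtain z where "z \<in> K" "\<forall>i. g i z < g i x" by blast
    then show "\<exists>u\<in>upper_image K g. \<forall>i. u $ i < (\<chi> i. g i x) $ i"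
      by (intro bexI[OF _ value_mem_upper_image]) auto
  qed
  moreover have "weakly_pareto_value K g (\<chi> i. g i x) \<longleftrightarrow> \<not> (\<exists>z\<in>K. \<forall>i. g i z < g i x)"
    using assms unfolding weakly_pareto_value_def weakly_pareto_def by (auto simp: vec_eq_iff)
  ultimately show ?thesis by blast
qed

lemma frontier_closure_interior_convex:
  fixes S :: "'a::euclidean_space set"
  assumes "convex S" "interior S \<noteq> {}"
  shows "frontier (closure (interior S)) = closure S - interior S"
  using assms by (simp add: frontier_def convex_closure_interior convex_interior_closure)

lemma weakly_pareto_value_iff_frontier:
  fixes g :: "'m::finite \<Rightarrow> real^'n \<Rightarrow> real"
  assumes "convex (upper_image K g)" "x \<in> K"
  shows "weakly_pareto_value K g (\<chi> i. g i x) \<longleftrightarrow>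
    (\<chi> i. g i x) \<in> frontier (closure (interior (upper_image K g)))"
proof -
  have "(\<chi> i. g i x + 1) \<in> interior (upper_image K g)"
    unfolding interior_upward_closed_iff[OF upward_closed_upper_image]
    using value_mem_upper_image[OF assms(2)] by force
  then have "interior (upper_image K g) \<noteq> {}" by blast
  then show ?thesis
    using closure_subset value_mem_upper_image[OF assms(2), of g]
    by (auto simp: frontier_closure_interior_convex[OF assms(1)]
        weakly_pareto_value_iff_not_interior[OF assms(2)])
qed

lemma closed_basic_semialgebraic:
  "closed {x. (\<forall>i\<in>E. peval (c i) x = 0) \<and> (\<forall>j\<in>I. peval (c j) x \<ge> 0)}"
proof -
  have "{x. (\<forall>i\<in>E. peval (c i) x = 0) \<and> (\<forall>j\<in>I. peval (c j) x \<ge> 0)} =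
    (\<Inter>i\<in>E. {x. peval (c i) x = 0}) \<inter> (\<Inter>j\<in>I. {x. peval (c j) x \<ge> 0})"
    by auto
  then show ?thesis
    by (simp only:) (intro closed_Int closed_INT ballI closed_Collect_eq closed_Collect_le
        continuous_on_const continuous_on_peval)
qed

theorem theorem3p2:
  fixes f :: "'m::finite \<Rightarrow> ('n::finite \<Rightarrow> nat) \<Rightarrow> real"
    and c :: "'k \<Rightarrow> ('n \<Rightarrow> nat) \<Rightarrow> real"
    and E I :: "'k set"
    and K :: "(real^'n) set" and U V :: "(real^'m) set" and d :: nat
  assumes "finite E" "finite I" "E \<inter> I = {}"
    and "\<forall>i. is_poly (f i)" "\<forall>i\<in>E \<union> I. is_poly (c i)"
    and K_def: "K = {x. (\<forall>i\<in>E. peval (c i) x = 0) \<and> (\<forall>j\<in>I. peval (c j) x \<ge> 0)}"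
    and "interior K \<noteq> {}"
    and d_def: "d = Max (range (\<lambda>i. pdeg (f i)))"
    and U_def: "U = {u. \<exists>x\<in>K. \<forall>i. u $ i \<ge> peval (f i) x}"
    and V_def: "V = {v. \<exists>y\<in>moment_cone d K. y (\<lambda>_. 0) = 1 \<and> (\<forall>i. v $ i > mpair d (f i) y)}"
  shows "interior (convex hull U) = V
    \<and> (convex U \<longrightarrow> (\<forall>v\<in>(\<lambda>x. \<chi> i. peval (f i) x) ` K.
          weakly_pareto_value K (\<lambda>i. peval (f i)) v \<longleftrightarrow> v \<in> frontier (closure V)))"
proof -
  have "closed K" unfolding K_def by (rule closed_basic_semialgebraic)
  have U: "U = upper_image K (\<lambda>i. peval (f i))" unfolding U_def upper_image_def ..
  have "pdeg (f i) \<le> d" for i unfolding d_def by (intro Max_ge) auto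
  then have V: "interior (convex hull U) = V"
    unfolding U V_def using assms(4)
    by (intro interior_convex_hull_upper_image_eq borel_closed[OF \<open>closed K\<close>]) auto
  show ?thesis
  proof (intro conjI impI ballI)
    show "interior (convex hull U) = V" by (fact V)
    fix v assume "convex U" and "v \<in> (\<lambda>x. \<chi> i. peval (f i) x) ` K"
    then obtain x where "x \<in> K" "v = (\<chi> i. peval (f i) x)" by blast
    moreover have "V = interior U" using V \<open>convex U\<close> convex_hull_eq[of U] by simp
    ultimately show "weakly_pareto_value K (\<lambda>i. peval (f i)) v \<longleftrightarrow> v \<in> frontier (closure V)"
      using weakly_pareto_value_iff_frontier \<open>convex U\<close> by (simp add: U)
  qed
qed

end
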